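(* Let $(\mathcal Q,d)$ be a Hadamard space, let $Y$ be a $\mathcal Q$-valued random variable, let $o\in\mathcal Q$, and let $\tau\in\mathcal S_0^+$. Assume $\mathbb E[\tau'(d(Y,o))]<\infty$. Let $m\in\arg\min_{q\in\mathcal Q}\mathbb E[\tau(d(Y,q))-\tau(d(Y,o))]$ and let $q\in\mathcal Q\setminus\{m\}$. Then $$\mathbb E\big[\tau(d(Y,q))-\tau(d(Y,m))\big]\ \ge\ \tfrac12\, d(q,m)^2\,\mathbb E\Big[\tau'^{\oplus}\big(\max(d(Y,m),d(Y,q))\big)\Big].$$
   Context: $\mathcal S$ denotes the set of nondecreasing convex functions $\tau:[0,\infty)\to\mathbb R$ that are differentiable on $(0,\infty)$ with concave derivative $\tau'$; one sets $\tau'(0):=\lim_{x\searrow0}\tau'(x)$. $\mathcal S_0^+$ is the set of $\tau\in\mathcal S$ with $\tau(0)=0$ and $\tau'(x)>0$ for all $x>0$. For a real function $g$, $g^{\oplus}$ and $g^{\ominus}$ denote its right and left derivatives; $\tau'^{\oplus}$ is the right derivative of $\tau'$ (it exists on $(0,\infty)$, is nonnegative and nonincreasing). A metric space $(\mathcal Q,d)$ is a Hadamard space if it is complete and for all $y_0,y_1\in\mathcal Q$ there exists $m\in\mathcal Q$ with $\frac12 d(y_0,q)^2+\frac12 d(y_1,q)^2-\frac14 d(y_0,y_1)^2\ge d(q,m)^2$ for all $q\in\mathcal Q$ (equivalently, a complete CAT(0) space). $\mathcal Q$ carries its Borel $\sigma$-algebra and $Y$ is a measurable map from a probability space into $\mathcal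 Q$. *)

theory Defs
  imports "HOL-Probability.Probability"
begin

text \<open>Hadamard space: complete metric space with the midpoint (CAT(0)) inequality.
  The metric space is the ambient type, with its metric topology and Borel sigma-algebra.\<close>
definition hadamard_space :: "'a::metric_space itself \<Rightarrow> bool" where
  "hadamard_space _ \<longleftrightarrow> Topological_Spaces.complete (UNIV :: 'a set) \<and>
     (\<forall>y0 y1 :: 'a. \<exists>m. \<forall>q.
        (1/2) * (dist y0 q)\<^sup>2 + (1/2) * (dist y1 q)\<^sup>2 - (1/4) * (dist y0 y1)\<^sup>2 \<ge> (dist q m)\<^sup>2)"

definition tau_deriv :: "(real \<Rightarrow> real) \<Rightarrow> real \<Rightarrow> real" where
  "tau_deriv \<tau> x = (if x > 0 then deriv \<tau> x else Lim (at_right 0) (deriv \<tau>))"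

definition right_deriv :: "(real \<Rightarrow> real) \<Rightarrow> real \<Rightarrow> real" where
  "right_deriv g x = Lim (at_right 0) (\<lambda>h. (g (x + h) - g x) / h)"

definition class_S :: "(real \<Rightarrow> real) \<Rightarrow> bool" where
  "class_S \<tau> \<longleftrightarrow> mono_on {0..} \<tau> \<and> convex_on {0..} \<tau> \<and>
     (\<forall>x>0. \<tau> differentiable (at x)) \<and> concave_on {0<..} (deriv \<tau>)"

definition class_S0plus :: "(real \<Rightarrow> real) \<Rightarrow> bool" where
  "class_S0plus \<tau> \<longleftrightarrow> class_S \<tau> \<and> \<tau> 0 = 0 \<and> (\<forall>x>0. tau_deriv \<tau> x > 0)"

end

theory Submission
  imports Defs
begin

text \<open>
  In a Hadamard space, repeated midpoints towards m give for every dyadic \<open>t = 2\<^sup>-\<^sup>n\<close> a point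
  \<open>p\<^sub>t\<close> with \<open>d(y,p\<^sub>t)\<^sup>2 \<le> (1-t) d(y,m)\<^sup>2 + t d(y,q)\<^sup>2 - t(1-t) d(m,q)\<^sup>2\<close> for all y.
  Fix y, let \<open>a = d(y,m)\<close>, \<open>b = d(y,q)\<close> and \<open>k = \<tau>'\<^sup>\<oplus>(max a b)\<close>. Concavity of \<open>\<tau>'\<close> makes
  \<open>\<tau>(x) - k x\<^sup>2/2\<close> nondecreasing and convex on \<open>[0, max a b]\<close>, which transfers the distance
  inequality to \<open>\<tau>(d(y,p\<^sub>t)) \<le> (1-t) \<tau>(a) + t \<tau>(b) - t(1-t) k d(m,q)\<^sup>2/2\<close>.
  Taking expectations, minimality of m at \<open>p\<^sub>t\<close> yields
  \<open>0 \<le> t \<bbbE>[\<tau>(d(Y,q)) - \<tau>(d(Y,m))] - t(1-t) d(m,q)\<^sup>2 \<bbbE>[k]/2\<close>; divide by t and let \<open>t \<rightarrow> 0\<close>.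
  The moment assumption makes all centred risks integrable, because
  \<open>|\<tau>(s) - \<tau>(r)| \<le> c (3 \<tau>'(r) + \<tau>'(2c))\<close> whenever \<open>|s - r| \<le> c\<close>.
\<close>

section \<open>Concave and convex real functions\<close>

lemma concave_on_cong:
  assumes "concave_on S f" "\<And>x. x \<in> S \<Longrightarrow> f x = g x"
  shows "concave_on S g"
  using assms unfolding concave_on_iff convex_alt by (smt (verit, del_insts))

lemma concave_on_slope_le:
  fixes g :: "real \<Rightarrow> real"
  assumes "concave_on I g" "u \<in> I" "w \<in> I" "u < v" "v < w"
  shows "(g w - g u) / (w - u) \<le> (g v - g u) / (v - u)"
    and "(g w - g v) / (w - v) \<le> (g w - g u) / (w - u)"
proof -
  have "convex_on I (\<lambda>x. - g x)"
    using assms(1) by (simp add: concave_on_def)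
  note slopes = convex_on_slope_le[OF this assms(2-5)]
  have flip: "(- g a - - g b) / (a - b) = - ((g b - g a) / (b - a))" if "a \<noteq> b" for a b
    using that by (simp add: field_split_simps)
  show "(g w - g u) / (w - u) \<le> (g v - g u) / (v - u)"
    using slopes(1) flip[of u v] flip[of u w] assms(4,5) by simp
  show "(g w - g v) / (w - v) \<le> (g w - g u) / (w - u)"
    using slopes(2) flip[of u w] flip[of v w] assms(4,5) by simp
qed

lemma antimono_tendsto_at_right_0_Sup:
  fixes Q :: "real \<Rightarrow> real"
  assumes anti: "\<And>h h'. 0 < h \<Longrightarrow> h \<le> h' \<Longrightarrow> Q h' \<le> Q h"
    and bdd: "bdd_above (Q ` {0<..})"
  shows "(Q \<longlongrightarrow> Sup (Q ` {0<..})) (at_right 0)"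
proof (rule tendstoI)
  fix e :: real
  assume "e > 0"
  then obtain h0 where h0: "0 < h0" "Sup (Q ` {0<..}) - e < Q h0"
    using less_cSup_iff[OF _ bdd, of "Sup (Q ` {0<..}) - e"] by auto
  have "dist (Q h) (Sup (Q ` {0<..})) < e" if "0 < h" "h < h0" for h
    using anti[of h h0] cSup_upper[OF _ bdd, of "Q h"] h0 that by (simp add: dist_real_def)
  then show "eventually (\<lambda>h. dist (Q h) (Sup (Q ` {0<..})) < e) (at_right 0)"
    unfolding eventually_at_right_field using h0(1) by blast
qed

lemma right_deriv_concave_on:
  fixes g :: "real \<Rightarrow> real"
  assumes conc: "concave_on {0<..} g" and mono: "mono_on {0<..} g" and "M > 0"
  shows "0 \<le> right_deriv g M"
    and "\<And>x y. 0 < x \<Longrightarrow> x < y \<Longrightarrow> y \<le> M \<Longrightarrow> right_deriv g M * (y - x) \<le> g y - g x"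
proof -
  define Q where "Q = (\<lambda>h. (g (M + h) - g M) / h)"
  have Q_le_chord: "Q h \<le> (g y - g x) / (y - x)" if "0 < h" "0 < x" "x < y" "y \<le> M" for h x y
  proof -
    have "Q h \<le> (g (M + h) - g y) / ((M + h) - y)"
    proof (cases "y = M")
      case False
      then show ?thesis
        using concave_on_slope_le(2)[OF conc, of y "M + h" M] that by (simp add: Q_def)
    qed (simp add: Q_def)
    also have "\<dots> \<le> (g y - g x) / (y - x)"
      using concave_on_slope_le(1)[OF conc, of x "M + h" y] concave_on_slope_le(2)[OF conc, of x "M + h" y]
        that by simp
    finally show ?thesis .
  qed
  have anti: "Q h' \<le> Q h" if "0 < h" "h \<le> h'" for h h'
    using concave_on_slope_le(1)[OF conc, of M "M + h'" "M + h"] that \<open>M > 0\<close>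
    by (cases "h = h'") (auto simp: Q_def)
  have bdd: "bdd_above (Q ` {0<..})"
    using Q_le_chord[of _ "M / 2" M] \<open>M > 0\<close> by (intro bdd_aboveI) auto
  have "right_deriv g M = Sup (Q ` {0<..})"
    unfolding right_deriv_def Q_def[symmetric]
    by (intro tendsto_Lim antimono_tendsto_at_right_0_Sup anti bdd) auto
  moreover have "0 \<le> Q 1"
    using mono_onD[OF mono, of M "M + 1"] \<open>M > 0\<close> by (simp add: Q_def)
  ultimately show "0 \<le> right_deriv g M"
    using cSup_upper[OF _ bdd, of "Q 1"] by simp
  fix x y :: real
  assume xy: "0 < x" "x < y" "y \<le> M"
  have "Sup (Q ` {0<..}) \<le> (g y - g x) / (y - x)"
    using Q_le_chord xy by (intro cSup_least) auto
  then show "right_deriv g M * (y - x) \<le> g y - g x"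
    using \<open>right_deriv g M = Sup (Q ` {0<..})\<close> xy by (simp add: pos_le_divide_eq)
qed

lemma convex_on_Icc_realI:
  fixes f f' :: "real \<Rightarrow> real"
  assumes cont: "continuous_on {a..b} f"
    and der: "\<And>x. a < x \<Longrightarrow> x < b \<Longrightarrow> (f has_real_derivative f' x) (at x)"
    and mono: "\<And>x y. a < x \<Longrightarrow> x \<le> y \<Longrightarrow> y < b \<Longrightarrow> f' x \<le> f' y"
  shows "convex_on {a..b} f"
proof (rule convex_on_linorderI)
  fix t x y :: real
  assume t: "0 < t" "t < 1" and xy: "x \<in> {a..b}" "y \<in> {a..b}" "x < y"
  define z where "z = (1 - t) * x + t * y"
  have gaps: "z - x = t * (y - x)" "y - z = (1 - t) * (y - x)"
    by (simp_all add: z_def algebra_simps)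
  have "0 < t * (y - x)" "0 < (1 - t) * (y - x)"
    using t xy by simp_all
  then have xz: "x < z" and zy: "z < y"
    using gaps by (smt (verit))+
  have mvt: "\<exists>\<xi>. u < \<xi> \<and> \<xi> < v \<and> f v - f u = (v - u) * f' \<xi>"
    if "x \<le> u" "u < v" "v \<le> y" for u v
  proof -
    have "continuous_on {u..v} f"
      using xy that by (intro continuous_on_subset[OF cont]) auto
    moreover have "f differentiable (at w)" if "u < w" "w < v" for w
      using der[of w] xy that \<open>x \<le> u\<close> \<open>v \<le> y\<close> real_differentiable_def by auto
    ultimately obtain l \<xi> where "u < \<xi>" "\<xi> < v" "DERIV f \<xi> :> l" "f v - f u = (v - u) * l"
      using MVT[OF \<open>u < v\<close>] by blast
    moreover have "l = f' \<xi>"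
      using DERIV_unique[OF \<open>DERIV f \<xi> :> l\<close> der[of \<xi>]] calculation xy that by auto
    ultimately show ?thesis by blast
  qed
  obtain \<xi> where \<xi>: "x < \<xi>" "\<xi> < z" "f z - f x = (z - x) * f' \<xi>"
    using mvt[of x z] xz zy by auto
  obtain \<eta> where \<eta>: "z < \<eta>" "\<eta> < y" "f y - f z = (y - z) * f' \<eta>"
    using mvt[of z y] xz zy by auto
  have "f' \<xi> \<le> f' \<eta>"
    using mono[of \<xi> \<eta>] \<xi> \<eta> xy by auto
  then have "(f z - f x) * (y - z) \<le> (f y - f z) * (z - x)"
    using \<xi>(3) \<eta>(3) xz zy by (simp add: mult_left_mono)
  then have "(f z - f x) * (1 - t) \<le> (f y - f z) * t"
    using gaps xy by (simp add: mult.assoc[symmetric] mult.commute[of _ "y - x"])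
  then show "f ((1 - t) *\<^sub>R x + t *\<^sub>R y) \<le> (1 - t) * f x + t * f y"
    by (simp add: z_def algebra_simps)
qed simp

section \<open>The class \<open>S\<^sub>0\<^sup>+\<close>\<close>

lemma class_S0plusD:
  assumes "class_S0plus \<tau>"
  shows "\<tau> 0 = 0" and "mono_on {0..} \<tau>" and "convex_on {0..} \<tau>"
    and "concave_on {0<..} (deriv \<tau>)"
    and "\<And>x. 0 < x \<Longrightarrow> (\<tau> has_real_derivative deriv \<tau> x) (at x)"
    and "\<And>x. 0 < x \<Longrightarrow> 0 < deriv \<tau> x"
  using assms
  by (auto simp: class_S0plus_def class_S_def tau_deriv_def DERIV_deriv_iff_real_differentiable)

lemma class_S0plus_above_tangent:
  assumes "class_S0plus \<tau>" "0 < x" "0 \<le> z"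
  shows "deriv \<tau> x * (z - x) \<le> \<tau> z - \<tau> x"
  using assms class_S0plusD[OF assms(1)]
  by (intro convex_on_imp_above_tangent[of "{0..}"])
    (auto intro: has_field_derivative_at_within simp: interior_Ici)

lemma class_S0plus_deriv_mono:
  assumes "class_S0plus \<tau>"
  shows "mono_on {0<..} (deriv \<tau>)"
proof (rule mono_onI)
  fix x y :: real
  assume "x \<in> {0<..}" "y \<in> {0<..}" "x \<le> y"
  then have "deriv \<tau> x * (y - x) \<le> deriv \<tau> y * (y - x)"
    using class_S0plus_above_tangent[OF assms, of x y] class_S0plus_above_tangent[OF assms, of y x]
    by (simp add: algebra_simps)
  then show "deriv \<tau> x \<le> deriv \<tau> y"
    using \<open>x \<le> y\<close> by (cases "x = y") (auto simp: mult_le_cancel_right)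
qed

lemma class_S0plus_continuous_on:
  assumes S: "class_S0plus \<tau>"
  shows "continuous_on {0..} \<tau>"
  unfolding continuous_on_eq_continuous_within
proof
  fix x :: real
  assume "x \<in> {0..}"
  show "continuous (at x within {0..}) \<tau>"
  proof (cases "x = 0")
    case False
    then show ?thesis
      using \<open>x \<in> {0..}\<close> class_S0plusD(5)[OF S, of x]
      by (auto intro: continuous_at_imp_continuous_at_within DERIV_isCont)
  next
    case True
    have "(\<tau> \<longlongrightarrow> 0) (at 0 within {0..})"
    proof (rule tendsto_sandwich[where f = "\<lambda>_. 0" and h = "\<lambda>z. z * \<tau> 1"])
      show "eventually (\<lambda>z. 0 \<le> \<tau> z) (at 0 within {0..})"
        using mono_onD[OF class_S0plusD(2)[OF S], of 0] class_S0plusD(1)[OF S]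
        by (auto simp: eventually_at_filter)
      have "\<tau> z \<le> z * \<tau> 1" if "0 \<le> z" "z \<le> 1" for z
        using convex_onD[OF class_S0plusD(3)[OF S], of z 0 1] class_S0plusD(1)[OF S] that by simp
      then show "eventually (\<lambda>z. \<tau> z \<le> z * \<tau> 1) (at 0 within {0..})"
        unfolding eventually_at by (intro exI[of _ 1]) (auto simp: dist_real_def)
    qed (auto intro!: tendsto_eq_intros)
    then show ?thesis
      using True class_S0plusD(1)[OF S] by (simp add: continuous_within)
  qed
qed

lemma class_S0plus_right_deriv:
  assumes S: "class_S0plus \<tau>" and "0 < M"
  shows "0 \<le> right_deriv (tau_deriv \<tau>) M"
    and "\<And>x y. 0 < x \<Longrightarrow> x < y \<Longrightarrow> y \<le> M \<Longrightarrow>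
           right_deriv (tau_deriv \<tau>) M * (y - x) \<le> deriv \<tau> y - deriv \<tau> x"
proof -
  have agree: "tau_deriv \<tau> x = deriv \<tau> x" if "x \<in> {0<..}" for x
    using that by (simp add: tau_deriv_def)
  have "concave_on {0<..} (tau_deriv \<tau>)"
    using concave_on_cong[OF class_S0plusD(4)[OF S]] agree by metis
  moreover have "mono_on {0<..} (tau_deriv \<tau>)"
    using class_S0plus_deriv_mono[OF S] agree by (simp add: mono_on_def)
  ultimately show "0 \<le> right_deriv (tau_deriv \<tau>) M"
    and "\<And>x y. 0 < x \<Longrightarrow> x < y \<Longrightarrow> y \<le> M \<Longrightarrow>
           right_deriv (tau_deriv \<tau>) M * (y - x) \<le> deriv \<tau> y - deriv \<tau> x"
    using right_deriv_concave_on[of "tau_deriv \<tau>" M] \<open>0 < M\<close> agree by auto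
qed

lemma class_S0plus_deriv_ge_linear:
  assumes S: "class_S0plus \<tau>" and x: "0 < x" "x \<le> M"
  shows "right_deriv (tau_deriv \<tau>) M * x \<le> deriv \<tau> x"
proof (rule tendsto_upperbound)
  let ?k = "right_deriv (tau_deriv \<tau>) M"
  show "((\<lambda>e. ?k * (x - e)) \<longlongrightarrow> ?k * x) (at_right 0)"
    by (auto intro!: tendsto_eq_intros)
  have "?k * (x - e) \<le> deriv \<tau> x" if "0 < e" "e < x" for e
    using class_S0plus_right_deriv(2)[OF S _ that x(2)] class_S0plusD(6)[OF S that(1)] x that by simp
  then show "eventually (\<lambda>e. ?k * (x - e) \<le> deriv \<tau> x) (at_right 0)"
    unfolding eventually_at_right_field using x(1) by blast
qed simp

lemma class_S0plus_minus_quadratic: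
  assumes S: "class_S0plus \<tau>" and "0 < M"
  defines "G \<equiv> \<lambda>x. \<tau> x - right_deriv (tau_deriv \<tau>) M / 2 * x\<^sup>2"
  shows "mono_on {0..M} G" and "convex_on {0..M} G"
proof -
  let ?k = "right_deriv (tau_deriv \<tau>) M"
  have G_deriv: "(G has_real_derivative deriv \<tau> x - ?k * x) (at x)" if "0 < x" for x
    unfolding G_def using class_S0plusD(5)[OF S that] by (auto intro!: derivative_eq_intros)
  have G_cont: "continuous_on {0..M} G"
    unfolding G_def using continuous_on_subset[OF class_S0plus_continuous_on[OF S]]
    by (intro continuous_intros) auto
  show "mono_on {0..M} G"
  proof (rule mono_onI)
    fix x y
    assume "x \<in> {0..M}" "y \<in> {0..M}" "x \<le> y"
    then show "G x \<le> G y"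
    proof (intro DERIV_nonneg_imp_increasing_open[OF \<open>x \<le> y\<close>])
      fix z
      assume "x < z" "z < y"
      then show "\<exists>l. (G has_real_derivative l) (at z) \<and> 0 \<le> l"
        using G_deriv[of z] class_S0plus_deriv_ge_linear[OF S, of z] \<open>x \<in> {0..M}\<close> \<open>y \<in> {0..M}\<close>
        by auto
    qed (auto intro: continuous_on_subset[OF G_cont])
  qed
  show "convex_on {0..M} G"
  proof (rule convex_on_Icc_realI[OF G_cont G_deriv])
    fix x y :: real
    assume "0 < x" "x \<le> y" "y < M"
    then show "deriv \<tau> x - ?k * x \<le> deriv \<tau> y - ?k * y"
      using class_S0plus_right_deriv(2)[OF S \<open>0 < M\<close>, of x y]
      by (cases "x = y") (auto simp: algebra_simps)
  qed
qed

lemma le_convex_combination_if_sq_le: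
  fixes a b s t D :: real
  assumes "0 \<le> a" "0 \<le> b" "\<bar>a - b\<bar> \<le> D" "0 \<le> t" "t \<le> 1"
    and "s\<^sup>2 \<le> (1 - t) * a\<^sup>2 + t * b\<^sup>2 - t * (1 - t) * D\<^sup>2"
  shows "s \<le> (1 - t) * a + t * b"
proof -
  have "(a - b)\<^sup>2 \<le> D\<^sup>2"
    using power_mono[OF assms(3) abs_ge_zero, of 2] by simp
  then have "0 \<le> t * (1 - t) * (D\<^sup>2 - (a - b)\<^sup>2)"
    using assms(4,5) by simp
  moreover have "(1 - t) * a\<^sup>2 + t * b\<^sup>2 - t * (1 - t) * D\<^sup>2
        = ((1 - t) * a + t * b)\<^sup>2 - t * (1 - t) * (D\<^sup>2 - (a - b)\<^sup>2)"
    by (simp add: power2_eq_square algebra_simps)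
  ultimately have "s\<^sup>2 \<le> ((1 - t) * a + t * b)\<^sup>2"
    using assms(6) by linarith
  then show ?thesis
    by (rule power2_le_imp_le) (use assms(1,2,4,5) in simp)
qed

lemma class_S0plus_interpolation:
  assumes S: "class_S0plus \<tau>"
    and ab: "0 \<le> a" "0 \<le> b" "0 < max a b" "\<bar>a - b\<bar> \<le> D" and "0 \<le> s"
    and t: "0 \<le> t" "t \<le> 1"
    and s: "s\<^sup>2 \<le> (1 - t) * a\<^sup>2 + t * b\<^sup>2 - t * (1 - t) * D\<^sup>2"
  shows "\<tau> s \<le> (1 - t) * \<tau> a + t * \<tau> b
                - t * (1 - t) * (right_deriv (tau_deriv \<tau>) (max a b) / 2) * D\<^sup>2"
proof -
  define M where "M = max a b"
  define k where "k = right_deriv (tau_deriv \<tau>) M"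
  define G where "G = (\<lambda>x. \<tau> x - k / 2 * x\<^sup>2)"
  have G: "mono_on {0..M} G" "convex_on {0..M} G"
    using class_S0plus_minus_quadratic[OF S, of M] ab by (simp_all add: M_def k_def G_def)
  have "s \<le> (1 - t) * a + t * b"
    using le_convex_combination_if_sq_le[OF ab(1,2,4) t s] .
  moreover have "(1 - t) * a + t * b \<le> M"
    using convex_bound_le[where x = a and y = b and a = M and u = "1 - t" and v = t] t
    by (simp add: M_def)
  ultimately have "G s \<le> G ((1 - t) * a + t * b)"
    using mono_onD[OF G(1)] \<open>0 \<le> s\<close> by simp
  also have "\<dots> \<le> (1 - t) * G a + t * G b"
    using convex_onD[OF G(2), of t a b] t ab by (simp add: M_def)
  finally have "G s \<le> (1 - t) * G a + t * G b" .
  moreover have "k / 2 * s\<^sup>2 \<le> k / 2 * ((1 - t) * a\<^sup>2 + t * b\<^sup>2 - t * (1 - t) * D\<^sup>2)"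
    using class_S0plus_right_deriv(1)[OF S, of M] ab s by (intro mult_left_mono) (auto simp: M_def k_def)
  moreover have "(1 - t) * G a + t * G b + k / 2 * ((1 - t) * a\<^sup>2 + t * b\<^sup>2 - t * (1 - t) * D\<^sup>2)
      = (1 - t) * \<tau> a + t * \<tau> b - t * (1 - t) * (k / 2) * D\<^sup>2"
    by (simp add: G_def field_simps)
  ultimately show ?thesis
    unfolding M_def[symmetric] k_def[symmetric] G_def by linarith
qed

text \<open>The absolute value is needed only at \<open>r = 0\<close>, where \<open>tau_deriv \<tau> 0\<close> is a limit of
  unknown sign (it is arbitrary if the limit does not exist).\<close>

lemma class_S0plus_deriv_shift_le:
  assumes S: "class_S0plus \<tau>" and "0 \<le> r" "0 < c"
  shows "deriv \<tau> (r + c) \<le> 3 * \<bar>tau_deriv \<tau> r\<bar> + deriv \<tau> (2 * c)"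
proof (cases "r \<le> c")
  case True
  then show ?thesis
    using mono_onD[OF class_S0plus_deriv_mono[OF S], of "r + c" "2 * c"] assms by simp
next
  case False
  then have r: "0 < r" "c < r"
    using assms by auto
  have "r / 2 \<in> {0<..}" "r + c \<in> {0<..}" "r / 2 < r" "r < r + c"
    using r \<open>0 < c\<close> by auto
  note slope = concave_on_slope_le[OF class_S0plusD(4)[OF S] this]
  have "(deriv \<tau> (r + c) - deriv \<tau> r) / c \<le> (deriv \<tau> r - deriv \<tau> (r / 2)) / (r / 2)"
    using order_trans[OF slope(2) slope(1)] by simp
  also have "\<dots> \<le> deriv \<tau> r / (r / 2)"
    using class_S0plusD(6)[OF S, of "r / 2"] r by (intro divide_right_mono) auto
  finally have "deriv \<tau> (r + c) - deriv \<tau> r \<le> c * (deriv \<tau> r / (r / 2))"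
    using \<open>0 < c\<close> by (simp add: divide_le_eq mult.commute)
  also have "\<dots> \<le> r * (deriv \<tau> r / (r / 2))"
    using class_S0plusD(6)[OF S, of r] r by (intro mult_right_mono) auto
  finally have "deriv \<tau> (r + c) \<le> 3 * deriv \<tau> r"
    using r by simp
  then show ?thesis
    using class_S0plusD(6)[OF S, of "2 * c"] r \<open>0 < c\<close> by (simp add: tau_deriv_def)
qed

lemma class_S0plus_diff_le:
  assumes S: "class_S0plus \<tau>" and "0 \<le> r" "0 \<le> s" "\<bar>s - r\<bar> \<le> c"
  shows "\<bar>\<tau> s - \<tau> r\<bar> \<le> c * (3 * \<bar>tau_deriv \<tau> r\<bar> + deriv \<tau> (2 * c))"
proof (cases "s = r")
  case True
  have "0 \<le> c * (3 * \<bar>tau_deriv \<tau> r\<bar> + deriv \<tau> (2 * c))"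
    using assms class_S0plusD(6)[OF S, of "2 * c"] by (cases "c = 0") (auto intro!: mult_nonneg_nonneg)
  with True show ?thesis
    by simp
next
  case False
  define w where "w = max s r"
  define z where "z = min s r"
  have "0 < c" "0 < w" "0 \<le> z" "w - z = \<bar>s - r\<bar>"
    using assms False by (auto simp: w_def z_def)
  have "\<tau> z \<le> \<tau> w"
    using \<open>0 \<le> z\<close> by (intro mono_onD[OF class_S0plusD(2)[OF S]]) (auto simp: w_def z_def)
  then have "\<bar>\<tau> s - \<tau> r\<bar> = \<tau> w - \<tau> z"
    by (auto simp: w_def z_def max_def min_def)
  also have "\<dots> \<le> deriv \<tau> w * \<bar>s - r\<bar>"
    using class_S0plus_above_tangent[OF S \<open>0 < w\<close> \<open>0 \<le> z\<close>] \<open>w - z = \<bar>s - r\<bar>\<close>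
    by (simp add: algebra_simps)
  also have "\<dots> \<le> deriv \<tau> (r + c) * c"
    using mono_onD[OF class_S0plus_deriv_mono[OF S], of w "r + c"] class_S0plusD(6)[OF S, of "r + c"]
      assms \<open>0 < c\<close> \<open>0 < w\<close> by (intro mult_mono) (auto simp: w_def)
  also have "\<dots> \<le> c * (3 * \<bar>tau_deriv \<tau> r\<bar> + deriv \<tau> (2 * c))"
    using class_S0plus_deriv_shift_le[OF S \<open>0 \<le> r\<close> \<open>0 < c\<close>] \<open>0 < c\<close> by (simp add: mult.commute)
  finally show ?thesis .
qed

lemma integrable_class_S0plus_dist_diff:
  fixes Y :: "'w \<Rightarrow> 'q::metric_space"
  assumes "finite_measure M" "Y \<in> M \<rightarrow>\<^sub>M borel" and S: "class_S0plus \<tau>"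
    and int: "integrable M (\<lambda>\<omega>. tau_deriv \<tau> (dist (Y \<omega>) x0))"
  shows "integrable M (\<lambda>\<omega>. \<tau> (dist (Y \<omega>) p) - \<tau> (dist (Y \<omega>) x0))"
proof (rule Bochner_Integration.integrable_bound)
  interpret finite_measure M by fact
  define c where "c = dist p x0"
  show "integrable M (\<lambda>\<omega>. c * (3 * \<bar>tau_deriv \<tau> (dist (Y \<omega>) x0)\<bar> + deriv \<tau> (2 * c)))"
    using int by (intro integrable_mult_right Bochner_Integration.integrable_add integrable_abs) auto
  have "(\<lambda>x. \<tau> (max 0 x)) \<in> borel_measurable borel"
    using class_S0plusD(2)[OF S] by (intro borel_measurable_mono) (auto simp: mono_def mono_on_def)
  moreover have "(\<lambda>\<omega>. dist (Y \<omega>) z) \<in> borel_measurable M" for z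
    by (rule measurable_compose[OF assms(2) borel_measurable_continuous_onI]) (intro continuous_intros)
  ultimately have "(\<lambda>\<omega>. \<tau> (dist (Y \<omega>) z)) \<in> borel_measurable M" for z
    using measurable_compose[of "\<lambda>\<omega>. dist (Y \<omega>) z" M borel "\<lambda>x. \<tau> (max 0 x)"] by simp
  then show "(\<lambda>\<omega>. \<tau> (dist (Y \<omega>) p) - \<tau> (dist (Y \<omega>) x0)) \<in> borel_measurable M"
    by measurable
  have "\<bar>\<tau> (dist (Y \<omega>) p) - \<tau> (dist (Y \<omega>) x0)\<bar>
        \<le> c * (3 * \<bar>tau_deriv \<tau> (dist (Y \<omega>) x0)\<bar> + deriv \<tau> (2 * c))" for \<omega>
    using abs_dist_diff_le[of p "Y \<omega>" x0]
    by (intro class_S0plus_diff_le[OF S]) (auto simp: c_def dist_commute)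
  then show "AE \<omega> in M. norm (\<tau> (dist (Y \<omega>) p) - \<tau> (dist (Y \<omega>) x0))
               \<le> norm (c * (3 * \<bar>tau_deriv \<tau> (dist (Y \<omega>) x0)\<bar> + deriv \<tau> (2 * c)))"
    by (intro AE_I2) (auto intro: order_trans[OF _ abs_ge_self])
qed

section \<open>Hadamard spaces and the variational inequality\<close>

lemma hadamard_space_dyadic_point:
  fixes m q :: "'q::metric_space"
  assumes H: "hadamard_space TYPE('q)"
  shows "\<exists>p. \<forall>y. (dist y p)\<^sup>2 \<le> (1 - (1/2)^n) * (dist y m)\<^sup>2 + (1/2)^n * (dist y q)\<^sup>2
                   - (1/2)^n * (1 - (1/2)^n) * (dist m q)\<^sup>2"
proof (induction n)
  case 0
  show ?case by (intro exI[of _ q]) simp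
next
  case (Suc n)
  define t :: real where "t = (1/2)^n"
  define D where "D = dist m q"
  from Suc obtain r
    where r: "\<And>y. (dist y r)\<^sup>2 \<le> (1 - t) * (dist y m)\<^sup>2 + t * (dist y q)\<^sup>2 - t * (1 - t) * D\<^sup>2"
    unfolding t_def D_def by blast
  \<comment> \<open>the point for \<open>(1/2)^(n+1)\<close> is the midpoint of m and the point r for \<open>(1/2)^n\<close>\<close>
  from H obtain p
    where p: "\<And>y. (dist y p)\<^sup>2 \<le> 1/2 * (dist m y)\<^sup>2 + 1/2 * (dist r y)\<^sup>2 - 1/4 * (dist m r)\<^sup>2"
    unfolding hadamard_space_def by blast
  have t: "0 < t" "t \<le> 1"
    by (simp_all add: t_def power_le_one)
  have "(dist q r)\<^sup>2 \<le> (1 - t) * D\<^sup>2 - t * (1 - t) * D\<^sup>2"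
    using r[of q] by (simp add: D_def dist_commute)
  also have "\<dots> = ((1 - t) * D)\<^sup>2"
    by (simp add: power2_eq_square algebra_simps)
  finally have "(dist q r)\<^sup>2 \<le> ((1 - t) * D)\<^sup>2" .
  then have "dist q r \<le> (1 - t) * D"
    by (rule power2_le_imp_le) (use t in \<open>simp add: D_def\<close>)
  moreover have "D \<le> dist m r + dist r q"
    unfolding D_def by (rule dist_triangle)
  ultimately have "t * D \<le> dist m r"
    by (simp add: dist_commute algebra_simps)
  then have tD: "(t * D)\<^sup>2 \<le> (dist m r)\<^sup>2"
    using t by (intro power_mono) (auto simp: D_def)
  show ?case
  proof (intro exI[of _ p] allI)
    fix y
    have "(dist y p)\<^sup>2 \<le> 1/2 * (dist y m)\<^sup>2 + 1/2 * (dist y r)\<^sup>2 - 1/4 * (dist m r)\<^sup>2"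
      using p[of y] by (simp add: dist_commute)
    also have "\<dots> \<le> 1/2 * (dist y m)\<^sup>2 + 1/2 * ((1 - t) * (dist y m)\<^sup>2 + t * (dist y q)\<^sup>2
                     - t * (1 - t) * D\<^sup>2) - 1/4 * (t * D)\<^sup>2"
      using r[of y] tD by (intro diff_mono add_left_mono mult_left_mono) simp_all
    also have "\<dots> = (1 - t/2) * (dist y m)\<^sup>2 + (t/2) * (dist y q)\<^sup>2 - (t/2) * (1 - t/2) * D\<^sup>2"
      by (simp add: power2_eq_square field_simps)
    also have "t / 2 = (1/2) ^ Suc n"
      by (simp add: t_def)
    finally show "(dist y p)\<^sup>2 \<le> (1 - (1/2) ^ Suc n) * (dist y m)\<^sup>2 + (1/2) ^ Suc n * (dist y q)\<^sup>2
                   - (1/2) ^ Suc n * (1 - (1/2) ^ Suc n) * (dist m q)\<^sup>2"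
      by (simp add: D_def)
  qed
qed

lemma integral_lower_bound_by_vanishing_steps:
  fixes F k :: "'w \<Rightarrow> real" and t :: "nat \<Rightarrow> real"
  assumes F: "integrable M F" and k: "\<And>\<omega>. 0 \<le> k \<omega>" and "0 \<le> c"
    and t: "t \<longlonglongrightarrow> 0" "\<And>n. 0 < t n" "\<And>n. t n \<le> 1"
    and step: "\<And>n. \<exists>g. integrable M g \<and> 0 \<le> integral\<^sup>L M g \<and>
                 (\<forall>\<omega>. g \<omega> \<le> t n * F \<omega> - t n * (1 - t n) * c * k \<omega>)"
  shows "c * integral\<^sup>L M k \<le> integral\<^sup>L M F"
proof (cases "integrable M k")
  case True
  have "(1 - t n) * (c * integral\<^sup>L M k) \<le> integral\<^sup>L M F" for n
  proof -
    obtain g where g: "integrable M g" "0 \<le> integral\<^sup>L M g"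
      "\<And>\<omega>. g \<omega> \<le> t n * F \<omega> - t n * (1 - t n) * c * k \<omega>"
      using step[of n] by blast
    have "0 \<le> integral\<^sup>L M g"
      by (fact g(2))
    also have "\<dots> \<le> (\<integral>\<omega>. t n * F \<omega> - t n * (1 - t n) * c * k \<omega> \<partial>M)"
      using g F True by (intro integral_mono) auto
    also have "\<dots> = t n * (integral\<^sup>L M F - (1 - t n) * (c * integral\<^sup>L M k))"
      using F True by (simp add: algebra_simps)
    finally show ?thesis
      using t(2)[of n] by (simp add: zero_le_mult_iff)
  qed
  moreover have "(\<lambda>n. (1 - t n) * (c * integral\<^sup>L M k)) \<longlonglongrightarrow> c * integral\<^sup>L M k"
    using t(1) by (auto intro!: tendsto_eq_intros)
  ultimately show ?thesis
    by (intro LIMSEQ_le_const2) auto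
next
  case False
  obtain g where g: "integrable M g" "0 \<le> integral\<^sup>L M g"
    "\<And>\<omega>. g \<omega> \<le> t 0 * F \<omega> - t 0 * (1 - t 0) * c * k \<omega>"
    using step[of 0] by blast
  have "0 \<le> integral\<^sup>L M g"
    by (fact g(2))
  also have "\<dots> \<le> (\<integral>\<omega>. t 0 * F \<omega> \<partial>M)"
  proof (intro integral_mono)
    show "g \<omega> \<le> t 0 * F \<omega>" for \<omega>
      using g(3)[of \<omega>] k[of \<omega>] t(2,3)[of 0] \<open>0 \<le> c\<close> by (smt (verit) mult_nonneg_nonneg)
  qed (use g F in auto)
  finally have "0 \<le> integral\<^sup>L M F"
    using t(2)[of 0] by (simp add: zero_le_mult_iff)
  then show ?thesis
    using False by (simp add: not_integrable_integral_eq)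
qed

lemma max_dist_pos:
  fixes m q :: "'q::metric_space"
  assumes "q \<noteq> m"
  shows "0 < max (dist y m) (dist y q)"
  using dist_triangle3[of m q y] assms by (auto simp: max_def)

lemma class_S0plus_dyadic_descent:
  fixes m q :: "'q::metric_space" and n :: nat
  assumes H: "hadamard_space TYPE('q)" and S: "class_S0plus \<tau>" and "q \<noteq> m"
  defines "t \<equiv> (1/2 :: real) ^ n"
  shows "\<exists>p. \<forall>y. \<tau> (dist y p) - \<tau> (dist y m)
          \<le> t * (\<tau> (dist y q) - \<tau> (dist y m))
             - t * (1 - t) * ((dist m q)\<^sup>2 / 2) * right_deriv (tau_deriv \<tau>) (max (dist y m) (dist y q))"
proof -
  obtain p where p: "\<And>y. (dist y p)\<^sup>2 \<le> (1 - t) * (dist y m)\<^sup>2 + t * (dist y q)\<^sup>2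
                             - t * (1 - t) * (dist m q)\<^sup>2"
    using hadamard_space_dyadic_point[OF H] unfolding t_def by blast
  have "\<tau> (dist y p) \<le> (1 - t) * \<tau> (dist y m) + t * \<tau> (dist y q)
      - t * (1 - t) * (right_deriv (tau_deriv \<tau>) (max (dist y m) (dist y q)) / 2) * (dist m q)\<^sup>2" for y
    using abs_dist_diff_le[of m y q] p[of y] max_dist_pos[OF \<open>q \<noteq> m\<close>, of y]
    by (intro class_S0plus_interpolation[OF S]) (auto simp: dist_commute t_def power_le_one)
  then show ?thesis
    by (intro exI[of _ p]) (auto simp: algebra_simps)
qed

theorem mainTheorem1:
  fixes M :: "'w measure" and Y :: "'w \<Rightarrow> 'q::metric_space"
    and x0 m q :: 'q and \<tau> :: "real \<Rightarrow> real"
  assumes "hadamard_space TYPE('q)"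
    and "prob_space M"
    and "Y \<in> M \<rightarrow>\<^sub>M borel"
    and "class_S0plus \<tau>"
    and "integrable M (\<lambda>\<omega>. tau_deriv \<tau> (dist (Y \<omega>) x0))"
    and "\<forall>p. (\<integral>\<omega>. \<tau> (dist (Y \<omega>) m) - \<tau> (dist (Y \<omega>) x0) \<partial>M)
               \<le> (\<integral>\<omega>. \<tau> (dist (Y \<omega>) p) - \<tau> (dist (Y \<omega>) x0) \<partial>M)"
    and "q \<noteq> m"
  shows "(\<integral>\<omega>. \<tau> (dist (Y \<omega>) q) - \<tau> (dist (Y \<omega>) m) \<partial>M)
         \<ge> (1/2) * (dist q m)\<^sup>2 *
           (\<integral>\<omega>. right_deriv (tau_deriv \<tau>) (max (dist (Y \<omega>) m) (dist (Y \<omega>) q)) \<partial>M)"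
proof -
  have "finite_measure M"
    using assms(2) by (simp add: prob_space_def)
  note int = integrable_class_S0plus_dist_diff[OF this assms(3-5)]
  have excess: "integrable M (\<lambda>\<omega>. \<tau> (dist (Y \<omega>) p) - \<tau> (dist (Y \<omega>) m))"
    "0 \<le> (\<integral>\<omega>. \<tau> (dist (Y \<omega>) p) - \<tau> (dist (Y \<omega>) m) \<partial>M)" for p
    using Bochner_Integration.integrable_diff[OF int[of p] int[of m]]
      Bochner_Integration.integral_diff[OF int[of p] int[of m]] assms(6) by simp_all
  note right_deriv_nonneg = class_S0plus_right_deriv(1)[OF assms(4) max_dist_pos[OF assms(7)]]
  have "(dist m q)\<^sup>2 / 2 * (\<integral>\<omega>. right_deriv (tau_deriv \<tau>) (max (dist (Y \<omega>) m) (dist (Y \<omega>) q)) \<partial>M)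
        \<le> (\<integral>\<omega>. \<tau> (dist (Y \<omega>) q) - \<tau> (dist (Y \<omega>) m) \<partial>M)"
  proof (rule integral_lower_bound_by_vanishing_steps[where t = "\<lambda>n. (1/2)^n"])
    fix n
    obtain p where "\<forall>y. \<tau> (dist y p) - \<tau> (dist y m)
        \<le> (1/2)^n * (\<tau> (dist y q) - \<tau> (dist y m)) - (1/2)^n * (1 - (1/2)^n) * ((dist m q)\<^sup>2 / 2)
           * right_deriv (tau_deriv \<tau>) (max (dist y m) (dist y q))"
      using class_S0plus_dyadic_descent[OF assms(1,4,7)] by blast
    with excess[of p] show "\<exists>g. integrable M g \<and> 0 \<le> integral\<^sup>L M g \<and>
      (\<forall>\<omega>. g \<omega> \<le> (1/2)^n * (\<tau> (dist (Y \<omega>) q) - \<tau> (dist (Y \<omega>) m))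
        - (1/2)^n * (1 - (1/2)^n) * ((dist m q)\<^sup>2 / 2)
          * right_deriv (tau_deriv \<tau>) (max (dist (Y \<omega>) m) (dist (Y \<omega>) q)))"
      by blast
  qed (use excess right_deriv_nonneg in \<open>auto intro!: LIMSEQ_power_zero power_le_one\<close>)
  then show ?thesis
    by (simp add: dist_commute)
qed

end
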